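(* Consider a seller with one item and a single ex-post rational buyer. The item's quality $q\in Q=[q_1,q_2]$ is drawn from a distribution with CDF $G$ and density $g$, observed only by the seller; the buyer's valuation is $v(q)$ with $v:Q\to\mathbb{R}^+$ monotone increasing with inverse $v^{-1}$. A fixed-price signaling mechanism is a pair $(\pi,p)$ where $\pi:Q\to[0,1]$ gives the probability of sending signal $1$ ("buy") when the quality is $q$ (signal $0$, "not buy", is sent with probability $1-\pi(q)$), and $p$ is a fixed price. The mechanism is obedient for the ex-post rational buyer if $\int_{q_1}^{v^{-1}(p)}\pi(q)g(q)\,\mathrm{d}q=0$ and $\int_{v^{-1}(p)}^{q_2}[1-\pi(q)]g(q)\,\mathrm{d}q=0$. The seller's revenue is $Rev_{sig}(\pi,p)=p\int_Q\pi(q)g(q)\,\mathrm{d}q$. Then the mechanism $(\pi^*,p^* )$ with $p^*\in\arg\max_p[1-G(v^{-1}(p))]\cdot p$ and $\pi^*(q)=0$ if $q<v^{-1}(p^* )$, $\pi^*(q)=1$ otherwise, is an optimal (revenue-maximizing) obedient fixed-price signaling mechanism.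
   Context: An ex-post rational buyer buys if and only if his valuation $v(q)$ at the realized quality is at least $p$; obedience means that after signal 1 the buyer is (almost surely) willing to buy and after signal 0 he is (almost surely) not willing to buy, which the paper expresses by the two integral conditions above. Optimality is over all obedient pairs $(\pi,p)$. *)

theory Defs
  imports "HOL-Analysis.Analysis"
begin

text \<open>We require
  pi to take values in [0,1] on Q and the integrand pi * g to be integrable on Q
  (so that all integrals in the paper exist).\<close>
definition sig_mechanism :: "real set \<Rightarrow> (real \<Rightarrow> real) \<Rightarrow> (real \<Rightarrow> real) \<Rightarrow> bool" where
  "sig_mechanism Q g \<pi> \<longleftrightarrow>
     (\<forall>q\<in>Q. 0 \<le> \<pi> q \<and> \<pi> q \<le> 1) \<and> (\<lambda>q. \<pi> q * g q) integrable_on Q"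

text \<open>For p in the range of v these
  are the paper's integrals over [q1, v^-1 p] and [v^-1 p, q2].\<close>
definition obedient :: "real set \<Rightarrow> (real \<Rightarrow> real) \<Rightarrow> (real \<Rightarrow> real) \<Rightarrow> (real \<Rightarrow> real) \<Rightarrow> real \<Rightarrow> bool" where
  "obedient Q v g \<pi> p \<longleftrightarrow>
     integral {q\<in>Q. v q < p} (\<lambda>q. \<pi> q * g q) = 0 \<and>
     integral {q\<in>Q. p \<le> v q} (\<lambda>q. (1 - \<pi> q) * g q) = 0"

definition rev_sig :: "real set \<Rightarrow> (real \<Rightarrow> real) \<Rightarrow> (real \<Rightarrow> real) \<Rightarrow> real \<Rightarrow> real" where
  "rev_sig Q g \<pi> p = p * integral Q (\<lambda>q. \<pi> q * g q)"

end

theory Submission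
  imports Defs
begin

text \<open>Since v is monotone, the set of qualities at which the buyer is willing to pay p is, up to
  one point, an upper interval [a, q2].  Obedience then forces the mechanism to coincide, up to
  integrals, with the threshold mechanism at a, so its revenue is p times the tail mass
  H(a) = 1 - G(a).  Every b > a satisfies p \<le> v b, hence p H(b) \<le> v(b) H(b), which is
  bounded by the revenue of the posted price v(b) and thus by that of p*; continuity of H
  lets b tend to a.\<close>

lemma integral_spike_set_point:
  fixes f :: "'n::euclidean_space \<Rightarrow> 'a::banach"
  assumes "S - T \<subseteq> {c}" "T - S \<subseteq> {c}"
  shows "integral S f = integral T f"
  by (rule integral_spike_set; rule negligible_subset[of "{c}"]) (use assms in auto)

lemma upclosed_subset_Icc_threshold:
  fixes U :: "real set"
  assumes "q1 \<le> q2" "U \<subseteq> {q1..q2}"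
    and up: "\<And>x y. x \<in> U \<Longrightarrow> y \<in> {q1..q2} \<Longrightarrow> x \<le> y \<Longrightarrow> y \<in> U"
  obtains a where "a \<in> {q1..q2}" "U \<subseteq> {a..q2}" "{a<..q2} \<subseteq> U"
proof
  define a where "a = Inf (insert q2 U)"
  have bdd: "bdd_below (insert q2 U)"
    using assms(1,2) by (intro bdd_below_mono[OF bdd_below_Icc]) auto
  have lower: "a \<le> x" if "x \<in> insert q2 U" for x
    unfolding a_def using that bdd by (rule cInf_lower)
  show "a \<in> {q1..q2}"
    using lower[of q2] assms(1,2) unfolding a_def by (auto intro!: cInf_greatest)
  show "U \<subseteq> {a..q2}"
    using lower assms(2) by auto
  show "{a<..q2} \<subseteq> U"
  proof
    fix y assume y: "y \<in> {a<..q2}"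
    then obtain x where x: "x \<in> insert q2 U" "x < y"
      using cInf_less_iff[OF _ bdd] unfolding a_def by auto
    then have "x \<in> U" using y by auto
    then show "y \<in> U" using up x y assms(2) by fastforce
  qed
qed

lemma threshold_sig_mechanism:
  fixes a p q1 q2 :: real and g :: "real \<Rightarrow> real"
  assumes "a \<in> {q1..q2}" "g integrable_on {q1..q2}"
  shows "sig_mechanism {q1..q2} g (\<lambda>q. if q < a then 0 else 1)"
    and "rev_sig {q1..q2} g (\<lambda>q. if q < a then 0 else 1) p = p * integral {a..q2} g"
proof -
  have restrict: "(if q < a then 0 else 1) * g q = (if q \<in> {a..q2} then g q else 0)"
    if "q \<in> {q1..q2}" for q
    using that by auto
  have Int_eq: "{a..q2} \<inter> {q1..q2} = {a..q2}"
    using assms(1) by auto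
  have "(\<lambda>q. (if q < a then 0 else 1) * g q) integrable_on {q1..q2}
      \<longleftrightarrow> (\<lambda>q. if q \<in> {a..q2} then g q else 0) integrable_on {q1..q2}"
    using restrict by (rule integrable_cong)
  also have "\<dots> \<longleftrightarrow> g integrable_on {a..q2}"
    by (simp only: integrable_restrict_Int Int_eq)
  finally have "(\<lambda>q. (if q < a then 0 else 1) * g q) integrable_on {q1..q2}"
    using integrable_subinterval_real[OF assms(2)] assms(1) by auto
  then show "sig_mechanism {q1..q2} g (\<lambda>q. if q < a then 0 else 1)"
    unfolding sig_mechanism_def by simp
  have "integral {q1..q2} (\<lambda>q. (if q < a then 0 else 1) * g q)
      = integral {q1..q2} (\<lambda>q. if q \<in> {a..q2} then g q else 0)"
    using restrict by (rule integral_cong)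
  also have "\<dots> = integral {a..q2} g"
    by (simp only: integral_restrict_Int Int_eq)
  finally show "rev_sig {q1..q2} g (\<lambda>q. if q < a then 0 else 1) p = p * integral {a..q2} g"
    unfolding rev_sig_def by simp
qed

lemma threshold_obedient:
  fixes Q :: "real set"
  assumes "strict_mono_on Q v" "a \<in> Q"
  shows "obedient Q v g (\<lambda>q. if q < a then 0 else 1) (v a)"
proof -
  have less_iff: "v q < v a \<longleftrightarrow> q < a" if "q \<in> Q" for q
    using strict_mono_on_less[OF assms(1) that assms(2)] .
  have "integral {q\<in>Q. v q < v a} (\<lambda>q. (if q < a then 0 else 1) * g q)
      = integral {q\<in>Q. v q < v a} (\<lambda>q. 0)"
    using less_iff by (intro integral_cong) auto
  moreover have "integral {q\<in>Q. v a \<le> v q} (\<lambda>q. (1 - (if q < a then 0 else 1)) * g q)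
      = integral {q\<in>Q. v a \<le> v q} (\<lambda>q. 0)"
    using less_iff by (intro integral_cong) (auto simp: not_less[symmetric])
  ultimately show ?thesis
    unfolding obedient_def by simp
qed

lemma obedient_revenue_eq_threshold:
  assumes "q1 \<le> q2" "mono_on {q1..q2} v" "g integrable_on {q1..q2}"
    and sm: "sig_mechanism {q1..q2} g \<pi>" and ob: "obedient {q1..q2} v g \<pi> p"
  obtains a where "a \<in> {q1..q2}" "\<forall>b\<in>{a<..q2}. p \<le> v b"
    "rev_sig {q1..q2} g \<pi> p = p * integral {a..q2} g"
proof -
  define U where "U = {q\<in>{q1..q2}. p \<le> v q}"
  have up: "y \<in> U" if "x \<in> U" "y \<in> {q1..q2}" "x \<le> y" for x y
    using mono_onD[OF assms(2), of x y] that unfolding U_def by auto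
  have "U \<subseteq> {q1..q2}"
    unfolding U_def by auto
  then obtain a where a: "a \<in> {q1..q2}" "U \<subseteq> {a..q2}" "{a<..q2} \<subseteq> U"
    using up by (rule upclosed_subset_Icc_threshold[OF assms(1)])
  define f where "f q = \<pi> q * g q" for q
  have f_int: "f integrable_on {q1..q2}"
    using sm unfolding sig_mechanism_def f_def by simp
  then have f_int_parts: "f integrable_on {q1..a}" "f integrable_on {a..q2}"
    using a(1) by (auto intro: integrable_subinterval_real)
  have g_int: "g integrable_on {a..q2}"
    using integrable_subinterval_real[OF assms(3)] a(1) by auto
  have "{q\<in>{q1..q2}. v q < p} = {q1..q2} - U"
    unfolding U_def by auto
  moreover have "integral ({q1..q2} - U) f = integral {q1..a} f"
  proof (rule integral_spike_set_point)
    show "{q1..q2} - U - {q1..a} \<subseteq> {a}"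
      using a(3) by (auto simp: subset_iff not_le)
    show "{q1..a} - ({q1..q2} - U) \<subseteq> {a}"
      using a(1,2) by auto
  qed
  ultimately have "integral {q\<in>{q1..q2}. v q < p} f = integral {q1..a} f"
    by simp
  then have below: "integral {q1..a} f = 0"
    using ob unfolding obedient_def f_def by simp
  have "integral U (\<lambda>q. g q - f q) = integral {a..q2} (\<lambda>q. g q - f q)"
  proof (rule integral_spike_set_point)
    show "U - {a..q2} \<subseteq> {a}"
      using a(2) by auto
    show "{a..q2} - U \<subseteq> {a}"
      using a(3) by (force simp: subset_iff)
  qed
  then have "integral {a..q2} (\<lambda>q. g q - f q) = 0"
    using ob unfolding obedient_def U_def f_def by (simp add: algebra_simps)
  then have above: "integral {a..q2} f = integral {a..q2} g"
    using integral_diff[OF g_int f_int_parts(2)] by simp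
  have "integral {q1..q2} f = integral {q1..a} f + integral {a..q2} f"
    using a(1) f_int by (intro Henstock_Kurzweil_Integration.integral_combine[symmetric]) auto
  then have "rev_sig {q1..q2} g \<pi> p = p * integral {a..q2} g"
    unfolding rev_sig_def f_def[symmetric] using below above by simp
  moreover have "\<forall>b\<in>{a<..q2}. p \<le> v b"
    using a(3) unfolding U_def by auto
  ultimately show thesis
    using that a(1) by blast
qed

lemma obedient_revenue_le:
  assumes "q1 \<le> q2" "mono_on {q1..q2} v"
    and g_nonneg: "\<forall>q\<in>{q1..q2}. 0 \<le> g q" and g_int: "g integrable_on {q1..q2}"
    and posted_price_le: "\<forall>b\<in>{q1..q2}. v b * integral {b..q2} g \<le> M"
    and "sig_mechanism {q1..q2} g \<pi>" "obedient {q1..q2} v g \<pi> p"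
  shows "rev_sig {q1..q2} g \<pi> p \<le> M"
proof -
  obtain a where a: "a \<in> {q1..q2}" "\<forall>b\<in>{a<..q2}. p \<le> v b"
    and rev: "rev_sig {q1..q2} g \<pi> p = p * integral {a..q2} g"
    by (rule obedient_revenue_eq_threshold[OF assms(1,2) g_int assms(6,7)])
  define H where "H b = integral {b..q2} g" for b
  have right_of_a: "p * H b \<le> M" if "b \<in> {a<..q2}" for b
  proof -
    have "0 \<le> H b"
      unfolding H_def using that a(1) g_nonneg integrable_subinterval_real[OF g_int]
      by (intro integral_nonneg) auto
    then have "p * H b \<le> v b * H b"
      using a(2) that by (simp add: mult_right_mono)
    also have "\<dots> \<le> M"
      using posted_price_le that a(1) unfolding H_def by auto
    finally show ?thesis .
  qed
  have "p * H a \<le> M"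
  proof (cases "a = q2")
    case True
    have "v q2 * H q2 \<le> M"
      using posted_price_le[rule_format, of q2] assms(1) unfolding H_def by simp
    then show ?thesis
      using True unfolding H_def by simp
  next
    case False
    then have "a < q2" using a(1) by simp
    have "continuous_on {a..q2} H"
      unfolding H_def using a(1)
      by (intro continuous_on_subset[OF indefinite_integral_continuous_1'[OF g_int]]) auto
    then have "continuous_on (closure {a<..q2}) (\<lambda>b. p * H b)"
      using \<open>a < q2\<close> by (auto intro: continuous_intros)
    then show ?thesis
      using continuous_le_on_closure[of "{a<..q2}" "\<lambda>b. p * H b" a M] right_of_a \<open>a < q2\<close>
      by simp
  qed
  then show ?thesis
    using rev unfolding H_def by simp
qed

theorem mainTheorem3:
  fixes q1 q2 p_star :: real and G g v :: "real \<Rightarrow> real"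
  assumes "q1 < q2"
    and "\<forall>q\<in>{q1..q2}. 0 \<le> g q"
    and "g integrable_on {q1..q2}"
    and "integral {q1..q2} g = 1"
    and "\<forall>x\<in>{q1..q2}. G x = integral {q1..x} g"
    and "strict_mono_on {q1..q2} v"
    and "\<forall>q\<in>{q1..q2}. 0 \<le> v q"
    and "p_star \<in> v ` {q1..q2}"
    and "\<forall>p\<in>v ` {q1..q2}.
           (1 - G (the_inv_into {q1..q2} v p)) * p
             \<le> (1 - G (the_inv_into {q1..q2} v p_star)) * p_star"
  shows "sig_mechanism {q1..q2} g (\<lambda>q. if q < the_inv_into {q1..q2} v p_star then 0 else 1)
       \<and> obedient {q1..q2} v g (\<lambda>q. if q < the_inv_into {q1..q2} v p_star then 0 else 1) p_star
       \<and> (\<forall>\<pi> p. sig_mechanism {q1..q2} g \<pi> \<and> obedient {q1..q2} v g \<pi> p \<longrightarrow>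
             rev_sig {q1..q2} g \<pi> p
               \<le> rev_sig {q1..q2} g (\<lambda>q. if q < the_inv_into {q1..q2} v p_star then 0 else 1) p_star)"
proof -
  define a where "a = the_inv_into {q1..q2} v p_star"
  have inj: "inj_on v {q1..q2}"
    using assms(6) by (rule strict_mono_on_imp_inj_on)
  have a: "a \<in> {q1..q2}" "v a = p_star"
    unfolding a_def using the_inv_into_into[OF inj assms(8) subset_refl] f_the_inv_into_f[OF inj assms(8)] by auto
  have tail: "1 - G x = integral {x..q2} g" if "x \<in> {q1..q2}" for x
    using Henstock_Kurzweil_Integration.integral_combine[where a=q1 and c=x and b=q2 and f=g] that assms(3,4,5) by auto
  have optimal: "v b * integral {b..q2} g \<le> p_star * integral {a..q2} g"
    if "b \<in> {q1..q2}" for b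
  proof -
    have "v b * integral {b..q2} g = (1 - G (the_inv_into {q1..q2} v (v b))) * v b"
      using tail[OF that] the_inv_into_f_f[OF inj that] by simp
    also have "\<dots> \<le> (1 - G a) * p_star"
      using assms(9) that unfolding a_def by blast
    also have "\<dots> = p_star * integral {a..q2} g"
      using tail[OF a(1)] by simp
    finally show ?thesis .
  qed
  have "rev_sig {q1..q2} g \<pi> p \<le> rev_sig {q1..q2} g (\<lambda>q. if q < a then 0 else 1) p_star"
    if "sig_mechanism {q1..q2} g \<pi> \<and> obedient {q1..q2} v g \<pi> p" for \<pi> p
    using obedient_revenue_le[OF _ strict_mono_on_imp_mono_on[OF assms(6)] assms(2,3) _ _ _] optimal that
      threshold_sig_mechanism(2)[OF a(1) assms(3)] assms(1) by simp
  then show ?thesis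
    using threshold_sig_mechanism(1)[OF a(1) assms(3)] threshold_obedient[OF assms(6) a(1)] a(2)
    unfolding a_def[symmetric] by simp
qed

end
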